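(* Let $S$ be a finite state space, $P$ a row-stochastic $|S|\times|S|$ matrix (the transition matrix induced by a target policy $\pi$), $\beta\in(0,1)$, $d_\mu$ a probability vector on $S$ (the stationary distribution of a behavior policy $\mu$), and $f^\top=d_\mu^\top(I-\beta P)^{-1}$, assumed to satisfy $f(s)>0$ for all $s$. Let $\kappa=\min_s \frac{d_\mu(s)}{f(s)}$. Then $0\le\kappa\le 1-\beta$. Moreover, $\kappa=0$ when there is a state visited by the target policy but not by the behavior policy (i.e. a state $s$ with $d_\mu(s)=0$ and $[d_\mu^\top P^t](s)>0$ for some $t\ge 0$), and $\kappa=1-\beta$ when the two policies are identical (so that $d_\mu$ equals the stationary distribution $d_\pi$ of $P$, i.e. $d_\mu^\top P=d_\mu^\top$).
   Context: $d_\pi$ denotes the stationary distribution over states induced by the target policy, i.e. a probability vector with $d_\pi^\top P=d_\pi^\top$. *)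

theory Defs
  imports "HOL-Analysis.Analysis"
begin

primrec matpow :: "real^'n^'n \<Rightarrow> nat \<Rightarrow> real^'n^'n" where
  "matpow P 0 = mat 1"
| "matpow P (Suc t) = matpow P t ** P"

definition row_stochastic :: "real^'n^'n \<Rightarrow> bool" where
  "row_stochastic P \<longleftrightarrow> (\<forall>i j. 0 \<le> P$i$j) \<and> (\<forall>i. (\<Sum>j\<in>UNIV. P$i$j) = 1)"

definition prob_vector :: "real^'n \<Rightarrow> bool" where
  "prob_vector d \<longleftrightarrow> (\<forall>i. 0 \<le> d$i) \<and> (\<Sum>i\<in>UNIV. d$i) = 1"

end

theory Submission
  imports Defs
begin

text \<open>Writing \<open>M = I - \<beta>P\<close>, the vector \<open>f\<close> solves \<open>f\<^sup>T M = d\<^sub>\<mu>\<^sup>T\<close>. Since \<open>P\<close> is stochastic,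
  \<open>M\<close> is invertible for \<open>\<beta> < 1\<close> and right multiplication by \<open>P\<close> preserves total mass, so
  \<open>(1 - \<beta>) \<Sum> f = \<Sum> d\<^sub>\<mu> = 1\<close>. Summing \<open>\<kappa> f \<le> d\<^sub>\<mu>\<close> then gives \<open>\<kappa> \<le> 1 - \<beta>\<close>, and a state
  with \<open>d\<^sub>\<mu>(s) = 0\<close> forces \<open>\<kappa> = 0\<close>, whether or not the target policy reaches it. If \<open>d\<^sub>\<mu>\<close> is stationary, \<open>d\<^sub>\<mu>\<^sup>T M = (1 - \<beta>) d\<^sub>\<mu>\<^sup>T\<close>, so
  \<open>d\<^sub>\<mu> = (1 - \<beta>) f\<close> and every ratio equals \<open>1 - \<beta>\<close>.\<close>

lemma matrix_inv_inverse:
  assumes "invertible A"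
  shows "A ** matrix_inv A = mat 1" "matrix_inv A ** A = mat 1"
  using someI_ex[OF assms[unfolded invertible_def]] by (simp_all add: matrix_inv_def)

lemma vector_matrix_inv_cancel:
  assumes "invertible A"
  shows "(x v* matrix_inv A) v* A = x" "(x v* A) v* matrix_inv A = x"
  using matrix_inv_inverse[OF assms] by (simp_all add: vector_matrix_mul_assoc)

lemma row_stochastic_abs_matrix_vector_le:
  assumes P: "row_stochastic P" and m: "\<And>j. \<bar>x$j\<bar> \<le> m"
  shows "\<bar>(P *v x)$i\<bar> \<le> m"
proof -
  have "\<bar>(P *v x)$i\<bar> \<le> (\<Sum>j\<in>UNIV. \<bar>P$i$j * x$j\<bar>)"
    unfolding matrix_vector_mult_def by (simp add: sum_abs)
  also have "\<dots> \<le> (\<Sum>j\<in>UNIV. P$i$j * m)"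
    using P m by (intro sum_mono) (simp add: row_stochastic_def abs_mult mult_left_mono)
  also have "\<dots> = m"
    using P by (simp add: row_stochastic_def sum_distrib_right[symmetric])
  finally show ?thesis .
qed

lemma row_stochastic_resolvent_invertible:
  fixes P :: "real^'n^'n"
  assumes P: "row_stochastic P" and \<beta>: "0 \<le> \<beta>" "\<beta> < 1"
  shows "invertible (mat 1 - \<beta> *\<^sub>R P)"
  unfolding invertible_left_inverse matrix_left_invertible_ker
proof (intro allI impI)
  fix x :: "real^'n"
  assume "(mat 1 - \<beta> *\<^sub>R P) *v x = 0"
  then have fixpoint: "x = \<beta> *\<^sub>R (P *v x)"
    by (simp add: matrix_vector_mult_diff_rdistrib scaleR_matrix_vector_assoc)
  define m where "m = Max (range (\<lambda>j. \<bar>x$j\<bar>))"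
  have m_ge: "\<bar>x$j\<bar> \<le> m" for j
    unfolding m_def by (rule Max_ge) auto
  have "m \<in> range (\<lambda>j. \<bar>x$j\<bar>)"
    unfolding m_def by (rule Max_in) auto
  then obtain i where m_at: "m = \<bar>x$i\<bar>"
    by auto
  have "m = \<beta> * \<bar>(P *v x)$i\<bar>"
    using arg_cong[OF fixpoint, of "\<lambda>v. \<bar>v$i\<bar>"] \<beta> m_at by (simp add: abs_mult)
  also have "\<dots> \<le> \<beta> * m"
    using row_stochastic_abs_matrix_vector_le[OF P m_ge] \<beta> by (simp add: mult_left_mono)
  finally have "m \<le> 0"
    using \<beta> by (smt (verit) mult_le_cancel_right1)
  then show "x = 0"
    using m_ge by (simp add: vec_eq_iff) (meson abs_le_zero_iff order_trans)
qed

lemma sum_vector_matrix_row_stochastic: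
  assumes "row_stochastic P"
  shows "(\<Sum>j\<in>UNIV. (x v* P)$j) = (\<Sum>i\<in>UNIV. x$i)"
  using assms unfolding vector_matrix_mult_def row_stochastic_def
  by (simp add: sum.swap[of _ UNIV UNIV] sum_distrib_left[symmetric])

lemma sum_vector_matrix_resolvent:
  fixes P :: "real^'n^'n"
  assumes "row_stochastic P"
  shows "(\<Sum>j\<in>UNIV. (x v* (mat 1 - \<beta> *\<^sub>R P))$j) = (1 - \<beta>) * (\<Sum>i\<in>UNIV. x$i)"
  by (simp add: vector_matrix_mult_diff_rdistrib vector_scaleR_matrix_ac sum_subtractf
      sum_distrib_left[symmetric] sum_vector_matrix_row_stochastic[OF assms] algebra_simps)

lemma Min_ratio_le_ratio_sums:
  fixes d f :: "'a::finite \<Rightarrow> real"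
  assumes f_pos: "\<And>s. 0 < f s"
  shows "Min (range (\<lambda>s. d s / f s)) \<le> (\<Sum>s\<in>UNIV. d s) / (\<Sum>s\<in>UNIV. f s)"
proof -
  have "Min (range (\<lambda>s. d s / f s)) * f s \<le> d s" for s
    using Min_le[of "range (\<lambda>s. d s / f s)" "d s / f s"] f_pos[of s]
    by (simp add: pos_le_divide_eq)
  then have "Min (range (\<lambda>s. d s / f s)) * (\<Sum>s\<in>UNIV. f s) \<le> (\<Sum>s\<in>UNIV. d s)"
    by (simp add: sum_distrib_left sum_mono)
  moreover have "0 < (\<Sum>s\<in>UNIV. f s)"
    using f_pos by (intro sum_pos) auto
  ultimately show ?thesis
    by (simp add: pos_le_divide_eq)
qed

lemma stationary_vector_matrix_resolvent:
  fixes P :: "real^'n^'n"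
  assumes "x v* P = x"
  shows "x v* (mat 1 - \<beta> *\<^sub>R P) = (1 - \<beta>) *\<^sub>R x"
  using assms by (simp add: vector_matrix_mult_diff_rdistrib vector_scaleR_matrix_ac algebra_simps)

theorem lemma1:
  fixes P :: "real^'s^'s" and d\<mu> f :: "real^'s" and \<beta> \<kappa> :: real
  assumes P: "row_stochastic P"
    and \<beta>: "0 < \<beta>" "\<beta> < 1"
    and d: "prob_vector d\<mu>"
    and f_def: "f = d\<mu> v* matrix_inv (mat 1 - \<beta> *\<^sub>R P)"
    and f_pos: "\<forall>s. 0 < f$s"
    and \<kappa>_def: "\<kappa> = Min (range (\<lambda>s. d\<mu>$s / f$s))"
  shows "0 \<le> \<kappa> \<and> \<kappa> \<le> 1 - \<beta>
    \<and> ((\<exists>s. d\<mu>$s = 0 \<and> (\<exists>t. 0 < (d\<mu> v* matpow P t)$s)) \<longrightarrow> \<kappa> = 0)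
    \<and> (d\<mu> v* P = d\<mu> \<longrightarrow> \<kappa> = 1 - \<beta>)"
proof -
  define M where "M = mat 1 - \<beta> *\<^sub>R P"
  have M: "invertible M"
    using row_stochastic_resolvent_invertible[OF P] \<beta> by (simp add: M_def)
  have d_nonneg: "\<And>s. 0 \<le> d\<mu>$s" and d_sum: "(\<Sum>s\<in>UNIV. d\<mu>$s) = 1"
    using d unfolding prob_vector_def by auto
  have "f v* M = d\<mu>"
    using vector_matrix_inv_cancel(1)[OF M] by (simp add: f_def M_def)
  then have "(1 - \<beta>) * (\<Sum>s\<in>UNIV. f$s) = 1"
    using sum_vector_matrix_resolvent[OF P, of f \<beta>] d_sum by (simp add: M_def)
  then have "1 / (\<Sum>s\<in>UNIV. f$s) = 1 - \<beta>"
    by (metis div_by_1 mult_zero_right nonzero_mult_div_cancel_right zero_neq_one)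
  then have \<kappa>_le: "\<kappa> \<le> 1 - \<beta>"
    using Min_ratio_le_ratio_sums[of "\<lambda>s. f$s" "\<lambda>s. d\<mu>$s"] f_pos d_sum \<kappa>_def by simp
  have \<kappa>_le_ratio: "\<kappa> \<le> d\<mu>$s / f$s" for s
    unfolding \<kappa>_def by (rule Min_le) auto
  have \<kappa>_nonneg: "0 \<le> \<kappa>"
    using Min_in[of "range (\<lambda>s. d\<mu>$s / f$s)"] d_nonneg f_pos \<kappa>_def
    by (auto intro: divide_nonneg_pos)
  moreover have "\<kappa> = 1 - \<beta>" if stationary: "d\<mu> v* P = d\<mu>"
  proof -
    have "d\<mu> = (1 - \<beta>) *\<^sub>R f"
      using vector_matrix_inv_cancel(2)[OF M, of d\<mu>] stationary_vector_matrix_resolvent[OF stationary]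
      by (simp add: M_def f_def scaleR_vector_matrix_assoc)
    then have "d\<mu>$s / f$s = 1 - \<beta>" for s
      using f_pos[rule_format, of s] by (simp add: vec_eq_iff)
    then show ?thesis
      unfolding \<kappa>_def by simp
  qed
  moreover have "\<kappa> = 0" if "d\<mu>$s = 0" for s
    using \<kappa>_nonneg \<kappa>_le_ratio[of s] that by simp
  ultimately show ?thesis
    using \<kappa>_nonneg \<kappa>_le by blast
qed

end
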